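(* Let $\mathcal{G}$ be a cyclic group of prime order with generator $g$, and let $m$ be a positive integer. Let $\mathcal{A}_{m\text{-}\mathsf{MDL}}$ be a (possibly randomized) $m$-MDL algorithm in the GGM having at most $T$ group operation gates. Then \[\Pr_{\mathcal{A}_{m\text{-}\mathsf{MDL}},\mathbf{x}}\left[\mathcal{A}_{m\text{-}\mathsf{MDL}}^{\mathcal{G}}(g,g^{\mathbf{x}})\rightarrow\mathbf{x}\right]=O\!\left(\left(\frac{e(T+2m+1)^2}{2m|\mathcal{G}|}\right)^m\right),\] where $\mathbf{x}=(x_1,\dots,x_m)$ is uniformly random in $\{0,\dots,|\mathcal{G}|-1\}^m$ and $g^{\mathbf{x}}=(g^{x_1},\dots,g^{x_m})$.
   Context: Generic group model (Maurer-style). Let $\mathcal{G}$ be a cyclic group of known prime order $N$ with generator $g$. A GGM algorithm is a circuit with bit wires (values in $\{0,1\}$) and element wires (values in $\mathbb{Z}_N\cup\{\bot\}$; an element wire holding $x$ is written $g^x$). Bit gates act only on bit wires. Element gates: a labeling gate maps $\lceil\log_2N\rceil$ bit wires representing $x\in\mathbb{Z}_N$ to $g^x$ (or $\bot$ if no such $x$); a group operation gate maps element wires $g^x,g^y$ and a bit $b$ to $g^{x+by}$ (or $\bot$ if an input is $\bot$); an equality gate outputs the bit $1$ iff its two element inputs contain the same element different from $\bot$. The cost measure (group operation complexity) counts labeling and group operation gates; all other gates are free. No two equality gates have the same input wires. The $m$-multiple DL ($m$-MDL) problem asks, given $(g,g^{x_1},\dots,g^{x_m})$ on element wires for uniformly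 random $(x_1,\dots,x_m)\in\{0,\dots,N-1\}^m$, to output $(x_1,\dots,x_m)$. *)

theory Defs
  imports "HOL-Probability.Probability"
begin

text \<open>Wires are split into bit wires and element wires, each numbered in order
of creation. An element wire holds Some x (representing g^x, x in {0..N-1})
or None (representing bottom).\<close>

datatype gate =
    BitG "bool list \<Rightarrow> bool" "nat list"
  | Label "nat list"                     \<comment> \<open>labeling gate: bit wires (little endian) to g^x\<close>
  | GOp nat nat nat                      \<comment> \<open>group operation: g^x, g^y, bit b to g^(x+b*y)\<close>
  | EqG nat nat

record circuit =
  gates :: "gate list"
  outs  :: "nat list list"   \<comment> \<open>output: m blocks of bit wires, block i encodes x_i\<close>

definition nbits :: "nat \<Rightarrow> nat" where
  "nbits N = nat \<lceil>log 2 (real N)\<rceil>"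

definition bits_val :: "bool list \<Rightarrow> nat" where
  "bits_val bs = (\<Sum>i<length bs. if bs ! i then 2 ^ i else 0)"

fun step :: "nat \<Rightarrow> bool list \<times> nat option list \<Rightarrow> gate \<Rightarrow> bool list \<times> nat option list" where
  "step N (bs, es) (BitG f is) = (bs @ [f (map ((!) bs) is)], es)"
| "step N (bs, es) (Label is) =
     (bs, es @ [let v = bits_val (map ((!) bs) is) in if v < N then Some v else None])"
| "step N (bs, es) (GOp i j k) =
     (bs, es @ [case (es ! i, es ! j) of
                  (Some a, Some b) \<Rightarrow> Some ((a + (if bs ! k then b else 0)) mod N)
                | _ \<Rightarrow> None])"
| "step N (bs, es) (EqG i j) =
     (bs @ [case (es ! i, es ! j) of (Some a, Some b) \<Rightarrow> a = b | _ \<Rightarrow> False], es)"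

text \<open>Run the circuit on input (g, g^x_1, ..., g^x_m); g = g^1.\<close>
definition run :: "nat \<Rightarrow> circuit \<Rightarrow> nat list \<Rightarrow> bool list \<times> nat option list" where
  "run N c xs = foldl (step N) ([], Some 1 # map Some xs) (gates c)"

definition circ_output :: "nat \<Rightarrow> circuit \<Rightarrow> nat list \<Rightarrow> nat list" where
  "circ_output N c xs = map (\<lambda>ws. bits_val (map ((!) (fst (run N c xs))) ws)) (outs c)"

fun new_bits :: "gate \<Rightarrow> nat" where
  "new_bits (BitG _ _) = 1" | "new_bits (EqG _ _) = 1" | "new_bits _ = 0"

fun new_elems :: "gate \<Rightarrow> nat" where
  "new_elems (Label _) = 1" | "new_elems (GOp _ _ _) = 1" | "new_elems _ = 0"

fun wf_gate :: "nat \<Rightarrow> nat \<Rightarrow> nat \<Rightarrow> gate \<Rightarrow> bool" where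
  "wf_gate L nb ne (BitG f is) = (\<forall>i\<in>set is. i < nb)"
| "wf_gate L nb ne (Label is) = (length is = L \<and> (\<forall>i\<in>set is. i < nb))"
| "wf_gate L nb ne (GOp i j k) = (i < ne \<and> j < ne \<and> k < nb)"
| "wf_gate L nb ne (EqG i j) = (i < ne \<and> j < ne)"

fun wf_gates :: "nat \<Rightarrow> nat \<Rightarrow> nat \<Rightarrow> gate list \<Rightarrow> bool" where
  "wf_gates L nb ne [] = True"
| "wf_gates L nb ne (g # gs) =
     (wf_gate L nb ne g \<and> wf_gates L (nb + new_bits g) (ne + new_elems g) gs)"

fun eq_inputs :: "gate \<Rightarrow> nat set list" where
  "eq_inputs (EqG i j) = [{i, j}]" | "eq_inputs _ = []"

definition wf_circuit :: "nat \<Rightarrow> nat \<Rightarrow> circuit \<Rightarrow> bool" where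
  "wf_circuit N m c \<longleftrightarrow>
     wf_gates (nbits N) 0 (m + 1) (gates c) \<and>
     distinct (concat (map eq_inputs (gates c))) \<and>
     length (outs c) = m \<and>
     (\<forall>ws\<in>set (outs c). length ws = nbits N \<and>
        (\<forall>i\<in>set ws. i < sum_list (map new_bits (gates c))))"

fun costly :: "gate \<Rightarrow> bool" where
  "costly (Label _) = True" | "costly (GOp _ _ _) = True" | "costly _ = False"

definition cost :: "circuit \<Rightarrow> nat" where
  "cost c = length (filter costly (gates c))"

definition mdl_inputs :: "nat \<Rightarrow> nat \<Rightarrow> nat list set" where
  "mdl_inputs N m = {xs. length xs = m \<and> set xs \<subseteq> {..<N}}"

definition success_prob :: "nat \<Rightarrow> nat \<Rightarrow> circuit pmf \<Rightarrow> real" where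
  "success_prob N m A =
     measure_pmf.prob (pair_pmf A (pmf_of_set (mdl_inputs N m)))
       {(c, xs). circ_output N c xs = xs}"

end

theory Submission
  imports Defs "HOL-Number_Theory.Cong"
begin

(* Maurer's argument. Run the circuit symbolically on the secret x: every element wire carries
   an affine function of the exponent vector, and the inputs consistent with the equalities
   observed so far form an affine subspace V of Z_N^m containing x. An equality gate whose two
   affine functions agree at x but not on all of V cuts V down by the factor N (N is prime), so at
   most m gates cut; the outcome of every other equality gate is already determined by V. Hence
   the run, and with it the output, is determined by the set of cutting gates, and the circuit is
   correct on at most sum_{k<=m} (Q choose k) inputs, Q being the number of equality gates.
   Since equality gates have pairwise distinct inputs, Q is at most the number of unordered pairs
   of the at most T + m + 1 element wires, and sum_{k<=m} (Q choose k) <= (e P / m)^m for every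
   P >= Q, m. Averaging over the coins of the algorithm gives the bound with constant 1. *)

section \<open>Affine maps and affine subspaces of Z_N^m\<close>

lemma nth_less_if_mem_mdl_inputs: "y \<in> mdl_inputs N m \<Longrightarrow> i < m \<Longrightarrow> y ! i < N"
  unfolding mdl_inputs_def using nth_mem by fastforce

lemma mdl_inputs_eq_lists: "mdl_inputs N m = {xs. set xs \<subseteq> {..<N} \<and> length xs = m}"
  by (auto simp: mdl_inputs_def)

lemma finite_mdl_inputs: "finite (mdl_inputs N m)"
  unfolding mdl_inputs_eq_lists by (rule finite_lists_length_eq) simp

lemma card_mdl_inputs: "card (mdl_inputs N m) = N ^ m"
  unfolding mdl_inputs_eq_lists by (simp add: card_lists_length_eq)

(* Over the field Z_N, the maps Z_N^m -> Z_N that commute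
   with the combinations y + c (z - w) are exactly the affine maps, and the nonempty sets closed
   under these combinations are exactly the affine subspaces; we use these characterisations as
   the definitions. *)
definition affine_comb :: "nat \<Rightarrow> int \<Rightarrow> nat list \<Rightarrow> nat list \<Rightarrow> nat list \<Rightarrow> nat list" where
  "affine_comb N c y z w =
     map (\<lambda>i. nat ((int (y ! i) + c * (int (z ! i) - int (w ! i))) mod int N)) [0..<length y]"

definition affine_map :: "nat \<Rightarrow> nat \<Rightarrow> (nat list \<Rightarrow> nat) \<Rightarrow> bool" where
  "affine_map N m f \<longleftrightarrow> (\<forall>y\<in>mdl_inputs N m. f y < N) \<and>
     (\<forall>y\<in>mdl_inputs N m. \<forall>z\<in>mdl_inputs N m. \<forall>w\<in>mdl_inputs N m. \<forall>c.
        [int (f (affine_comb N c y z w)) = int (f y) + c * (int (f z) - int (f w))] (mod int N))"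

definition affine_closed :: "nat \<Rightarrow> nat list set \<Rightarrow> bool" where
  "affine_closed N V \<longleftrightarrow> (\<forall>y\<in>V. \<forall>z\<in>V. \<forall>w\<in>V. \<forall>c. affine_comb N c y z w \<in> V)"

lemma length_affine_comb [simp]: "length (affine_comb N c y z w) = length y"
  by (simp add: affine_comb_def)

lemma nth_affine_comb_less: "N > 0 \<Longrightarrow> i < length y \<Longrightarrow> affine_comb N c y z w ! i < N"
  by (simp add: affine_comb_def nat_less_iff)

lemma cong_nth_affine_comb:
  assumes "N > 0" "i < length y"
  shows "[int (affine_comb N c y z w ! i) = int (y ! i) + c * (int (z ! i) - int (w ! i))] (mod int N)"
  using assms by (simp add: affine_comb_def cong_def)

lemma affine_comb_mem_mdl_inputs:
  assumes "N > 0" "y \<in> mdl_inputs N m"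
  shows "affine_comb N c y z w \<in> mdl_inputs N m"
  using assms by (auto simp: mdl_inputs_def in_set_conv_nth nth_affine_comb_less)

lemma affine_closed_mdl_inputs: "N > 0 \<Longrightarrow> affine_closed N (mdl_inputs N m)"
  by (simp add: affine_closed_def affine_comb_mem_mdl_inputs)

lemma affine_comb_cancel:
  assumes "N > 0" "y \<in> mdl_inputs N m" "y' \<in> mdl_inputs N m"
    and "affine_comb N c y z w = affine_comb N c y' z w"
  shows "y = y'"
proof (rule nth_equalityI)
  show len: "length y = length y'"
    using assms(2,3) by (simp add: mdl_inputs_def)
  fix i assume i: "i < length y"
  have "[int (y ! i) + c * (int (z ! i) - int (w ! i)) = int (y' ! i) + c * (int (z ! i) - int (w ! i))] (mod int N)"
    using cong_nth_affine_comb[OF assms(1) i, of c z w] cong_nth_affine_comb[OF assms(1), of i y' c z w]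
      assms(4) i len by (metis cong_sym cong_trans)
  then have "[y ! i = y' ! i] (mod N)"
    by (simp add: cong_add_rcancel cong_int_iff)
  moreover have "y ! i < N" "y' ! i < N"
    using assms(2,3) i len by (simp_all add: nth_less_if_mem_mdl_inputs mdl_inputs_def)
  ultimately show "y ! i = y' ! i"
    by (rule cong_less_modulus_unique_nat)
qed

lemma affine_map_const: "v < N \<Longrightarrow> affine_map N m (\<lambda>_. v)"
  by (simp add: affine_map_def)

lemma affine_map_nth: "N > 0 \<Longrightarrow> i < m \<Longrightarrow> affine_map N m (\<lambda>y. y ! i)"
  unfolding affine_map_def
  by (simp add: nth_less_if_mem_mdl_inputs) (simp add: mdl_inputs_def cong_nth_affine_comb)

lemma affine_map_add_mod:
  assumes f: "affine_map N m f" and g: "affine_map N m g" and "N > 0"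
  shows "affine_map N m (\<lambda>y. (f y + g y) mod N)"
  unfolding affine_map_def
proof (intro conjI ballI allI)
  fix y assume "y \<in> mdl_inputs N m"
  show "(f y + g y) mod N < N"
    using \<open>N > 0\<close> by simp
next
  fix y z w c assume yzw: "y \<in> mdl_inputs N m" "z \<in> mdl_inputs N m" "w \<in> mdl_inputs N m"
  let ?u = "affine_comb N c y z w"
  have fu: "[int (f ?u) = int (f y) + c * (int (f z) - int (f w))] (mod int N)"
   and gu: "[int (g ?u) = int (g y) + c * (int (g z) - int (g w))] (mod int N)"
    using f g yzw by (simp_all add: affine_map_def)
  have "[int ((f ?u + g ?u) mod N) = int (f ?u) + int (g ?u)] (mod int N)"
    by (simp add: cong_def of_nat_mod mod_simps)
  also have "[int (f ?u) + int (g ?u) = int (f y + g y) + c * (int (f z + g z) - int (f w + g w))] (mod int N)"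
    using cong_add[OF fu gu] by (simp add: algebra_simps)
  also have "[int (f y + g y) + c * (int (f z + g z) - int (f w + g w))
      = int ((f y + g y) mod N) + c * (int ((f z + g z) mod N) - int ((f w + g w) mod N))] (mod int N)"
    by (intro cong_add cong_mult cong_diff cong_refl) (simp_all add: cong_def of_nat_mod)
  finally show "[int ((f ?u + g ?u) mod N)
      = int ((f y + g y) mod N) + c * (int ((f z + g z) mod N) - int ((f w + g w) mod N))] (mod int N)" .
qed

lemma affine_map_eq_iff_cong:
  assumes "affine_map N m f" "affine_map N m g" "y \<in> mdl_inputs N m"
  shows "f y = g y \<longleftrightarrow> [int (f y) = int (g y)] (mod int N)"
  using assms by (auto simp: affine_map_def cong_int_iff cong_less_modulus_unique_nat)

lemma affine_closed_Int_eq: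
  assumes "N > 0" "affine_closed N V" "V \<subseteq> mdl_inputs N m"
    and f: "affine_map N m f" and g: "affine_map N m g"
  shows "affine_closed N (V \<inter> {y. f y = g y})"
  unfolding affine_closed_def
proof (intro ballI allI)
  fix y z w c assume yzw: "y \<in> V \<inter> {y. f y = g y}" "z \<in> V \<inter> {y. f y = g y}" "w \<in> V \<inter> {y. f y = g y}"
  let ?u = "affine_comb N c y z w"
  have I: "y \<in> mdl_inputs N m" "z \<in> mdl_inputs N m" "w \<in> mdl_inputs N m"
    using yzw assms(3) by auto
  have "[int (f ?u) = int (f y) + c * (int (f z) - int (f w))] (mod int N)"
    using f I by (simp add: affine_map_def)
  also have "int (f y) + c * (int (f z) - int (f w)) = int (g y) + c * (int (g z) - int (g w))"
    using yzw by simp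
  also have "[\<dots> = int (g ?u)] (mod int N)"
    using g I by (simp add: affine_map_def cong_sym)
  finally have "f ?u = g ?u"
    using affine_map_eq_iff_cong[OF f g affine_comb_mem_mdl_inputs[OF assms(1) I(1)]] by blast
  moreover have "?u \<in> V"
    using assms(2) yzw by (simp add: affine_closed_def)
  ultimately show "?u \<in> V \<inter> {y. f y = g y}"
    by simp
qed

lemma card_affine_slice_le:
  assumes N: "prime N" and V: "affine_closed N V" "V \<subseteq> mdl_inputs N m"
    and f: "affine_map N m f" and g: "affine_map N m g"
    and y1: "y1 \<in> V" "f y1 = g y1" and y2: "y2 \<in> V" "f y2 \<noteq> g y2"
  shows "N * card (V \<inter> {y. f y = g y}) \<le> card V"
proof -
  \<comment> \<open>the translates of the slice along the N multiples of y2 - y1 are disjoint subsets of V\<close>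
  define W where "W = V \<inter> {y. f y = g y}"
  define shift where "shift = (\<lambda>(c::nat, y). affine_comb N (int c) y y2 y1)"
  let ?k = "int (f y2) - int (g y2)"
  have N0: "N > 0"
    using N prime_gt_0_nat by blast
  have I: "y1 \<in> mdl_inputs N m" "y2 \<in> mdl_inputs N m"
    using y1 y2 V by auto
  have shift_cong: "[int (f (shift (c, y))) - int (g (shift (c, y))) = int c * ?k] (mod int N)"
    if "y \<in> W" for c y
  proof -
    have "y \<in> mdl_inputs N m"
      using that V by (auto simp: W_def)
    then have "[int (f (shift (c, y))) - int (g (shift (c, y)))
        = (int (f y) + int c * (int (f y2) - int (f y1))) - (int (g y) + int c * (int (g y2) - int (g y1)))] (mod int N)"
      using f g I by (intro cong_diff) (simp_all add: affine_map_def shift_def)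
    also have "(int (f y) + int c * (int (f y2) - int (f y1))) - (int (g y) + int c * (int (g y2) - int (g y1)))
        = int c * ?k"
      using that y1(2) by (simp add: W_def algebra_simps)
    finally show ?thesis .
  qed
  have coprime_k: "coprime ?k (int N)"
  proof -
    have "\<not> [int (f y2) = int (g y2)] (mod int N)"
      using affine_map_eq_iff_cong[OF f g I(2)] y2(2) by simp
    then have "\<not> int N dvd ?k"
      by (simp add: cong_iff_dvd_diff)
    then show ?thesis
      using prime_imp_coprime[of "int N" ?k] N by (simp add: coprime_commute)
  qed
  have "inj_on shift ({..<N} \<times> W)"
  proof (rule inj_onI)
    fix p p' assume "p \<in> {..<N} \<times> W" "p' \<in> {..<N} \<times> W" and eq: "shift p = shift p'"
    then obtain c y c' y' where p: "p = (c, y)" "p' = (c', y')" "c < N" "c' < N" "y \<in> W" "y' \<in> W"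
      by blast
    have "[int c * ?k = int c' * ?k] (mod int N)"
      using shift_cong[OF p(5), of c] shift_cong[OF p(6), of c'] eq p(1,2) by (metis cong_sym cong_trans)
    then have "[c = c'] (mod N)"
      using coprime_k by (simp add: cong_mult_rcancel cong_int_iff)
    then have "c = c'"
      using p(3,4) by (rule cong_less_modulus_unique_nat)
    moreover have "y = y'"
      using affine_comb_cancel[OF N0, of y m y'] eq p V(2) \<open>c = c'\<close> by (auto simp: shift_def W_def)
    ultimately show "p = p'"
      using p by simp
  qed
  moreover have "shift ` ({..<N} \<times> W) \<subseteq> V"
    using V(1) y1 y2 by (auto simp: affine_closed_def shift_def W_def)
  moreover have "finite V"
    using V(2) finite_mdl_inputs finite_subset by blast
  ultimately have "card ({..<N} \<times> W) \<le> card V"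
    by (rule card_inj_on_le)
  then show ?thesis
    by (simp add: W_def card_cartesian_product)
qed

section \<open>Symbolic execution\<close>

(* Symbolic run on the secret x: bit wires are evaluated at x, element wires hold affine functions
   of the unknown exponent vector, the candidates are the inputs consistent with all equalities
   observed so far, and cuts records for every gate whether it shrank the candidates. *)
record sym_state =
  sym_bits :: "bool list"
  sym_elems :: "(nat list \<Rightarrow> nat) option list"
  candidates :: "nat list set"
  cuts :: "bool list"

fun sym_step :: "nat \<Rightarrow> nat list \<Rightarrow> sym_state \<Rightarrow> gate \<Rightarrow> sym_state" where
  "sym_step N x s (BitG f is) =
     s\<lparr>sym_bits := sym_bits s @ [f (map ((!) (sym_bits s)) is)], cuts := cuts s @ [False]\<rparr>"
| "sym_step N x s (Label is) =
     s\<lparr>sym_elems := sym_elems s @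
          [let v = bits_val (map ((!) (sym_bits s)) is) in if v < N then Some (\<lambda>_. v) else None],
       cuts := cuts s @ [False]\<rparr>"
| "sym_step N x s (GOp i j k) =
     s\<lparr>sym_elems := sym_elems s @
          [case (sym_elems s ! i, sym_elems s ! j) of
             (Some f, Some g) \<Rightarrow> Some (\<lambda>y. (f y + (if sym_bits s ! k then g y else 0)) mod N)
           | _ \<Rightarrow> None],
       cuts := cuts s @ [False]\<rparr>"
| "sym_step N x s (EqG i j) =
     (case (sym_elems s ! i, sym_elems s ! j) of
        (Some f, Some g) \<Rightarrow>
          let cut = (f x = g x \<and> (\<exists>y\<in>candidates s. f y \<noteq> g y)) in
          s\<lparr>sym_bits := sym_bits s @ [f x = g x],
            candidates := (if cut then candidates s \<inter> {y. f y = g y} else candidates s),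
            cuts := cuts s @ [cut]\<rparr>
      | _ \<Rightarrow> s\<lparr>sym_bits := sym_bits s @ [False], cuts := cuts s @ [False]\<rparr>)"

definition observe :: "nat list \<Rightarrow> sym_state \<Rightarrow> bool list \<times> nat option list" where
  "observe x s = (sym_bits s, map (map_option (\<lambda>f. f x)) (sym_elems s))"

lemma length_sym_step:
  "length (sym_bits (sym_step N x s g)) = length (sym_bits s) + new_bits g"
  "length (sym_elems (sym_step N x s g)) = length (sym_elems s) + new_elems g"
  by (cases g; simp add: Let_def split: option.split)+

lemma step_observe:
  assumes "wf_gate L (length (sym_bits s)) (length (sym_elems s)) g"
  shows "step N (observe x s) g = observe x (sym_step N x s g)"
  using assms by (cases g) (auto simp: observe_def Let_def split: option.split)

lemma foldl_step_observe:
  assumes "wf_gates L (length (sym_bits s)) (length (sym_elems s)) gs"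
  shows "foldl (step N) (observe x s) gs = observe x (foldl (sym_step N x) s gs)"
  using assms
proof (induction gs arbitrary: s)
  case (Cons g gs)
  then have "wf_gate L (length (sym_bits s)) (length (sym_elems s)) g"
    and "wf_gates L (length (sym_bits (sym_step N x s g))) (length (sym_elems (sym_step N x s g))) gs"
    by (simp_all add: length_sym_step)
  with Cons.IH show ?case
    by (simp add: step_observe)
qed simp

fun is_eq :: "gate \<Rightarrow> bool" where
  "is_eq (EqG _ _) = True"
| "is_eq _ = False"

lemma cuts_sym_step: "\<exists>b. cuts (sym_step N x s g) = cuts s @ [b] \<and> (b \<longrightarrow> is_eq g)"
  by (cases g) (auto simp: Let_def split: option.splits)

lemma cuts_foldl_sym_step:
  "\<exists>bs. cuts (foldl (sym_step N x) s gs) = cuts s @ bs \<and> list_all2 (\<lambda>b g. b \<longrightarrow> is_eq g) bs gs"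
proof (induction gs arbitrary: s)
  case (Cons g gs)
  obtain b where "cuts (sym_step N x s g) = cuts s @ [b]" "b \<longrightarrow> is_eq g"
    using cuts_sym_step by blast
  moreover obtain bs where "cuts (foldl (sym_step N x) (sym_step N x s g) gs) = cuts (sym_step N x s g) @ bs"
    "list_all2 (\<lambda>b g. b \<longrightarrow> is_eq g) bs gs"
    using Cons.IH by blast
  ultimately show ?case
    by (intro exI[of _ "b # bs"]) simp
qed simp

lemma sym_step_eq_if_cuts_eq:
  assumes "x \<in> candidates s" "y \<in> candidates s"
    and "cuts (sym_step N x s g) = cuts (sym_step N y s g)"
  shows "sym_step N x s g = sym_step N y s g \<and> x \<in> candidates (sym_step N x s g)
    \<and> y \<in> candidates (sym_step N x s g)"
proof (cases g)
  case (EqG i j)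
  show ?thesis
  proof (cases "\<exists>f h. sym_elems s ! i = Some f \<and> sym_elems s ! j = Some h")
    case True
    then obtain f h where fh: "sym_elems s ! i = Some f" "sym_elems s ! j = Some h"
      by blast
    have "(f x = h x) = (f y = h y)"
      using assms fh EqG by (cases "\<exists>z\<in>candidates s. f z \<noteq> h z") (auto simp: Let_def)
    then show ?thesis
      using assms fh EqG by (auto simp: Let_def)
  next
    case False
    then show ?thesis
      using assms EqG by (auto split: option.splits)
  qed
qed (use assms in auto)

lemma length_cuts_sym_step: "length (cuts (sym_step N x s g)) = Suc (length (cuts s))"
  using cuts_sym_step[of N x s g] by auto

lemma foldl_sym_step_eq_if_cuts_eq:
  assumes "x \<in> candidates s" "y \<in> candidates s"
    and "cuts (foldl (sym_step N x) s gs) = cuts (foldl (sym_step N y) s gs)"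
  shows "foldl (sym_step N x) s gs = foldl (sym_step N y) s gs"
  using assms
proof (induction gs arbitrary: s)
  case (Cons g gs)
  obtain bs where bs: "cuts (foldl (sym_step N x) (sym_step N x s g) gs) = cuts (sym_step N x s g) @ bs"
    and "list_all2 (\<lambda>b g. b \<longrightarrow> is_eq g) bs gs"
    using cuts_foldl_sym_step by blast
  obtain bs' where bs': "cuts (foldl (sym_step N y) (sym_step N y s g) gs) = cuts (sym_step N y s g) @ bs'"
    and "list_all2 (\<lambda>b g. b \<longrightarrow> is_eq g) bs' gs"
    using cuts_foldl_sym_step by blast
  have "length bs = length bs'"
    using \<open>list_all2 _ bs gs\<close> \<open>list_all2 _ bs' gs\<close> by (simp add: list_all2_lengthD)
  then have "cuts (sym_step N x s g) = cuts (sym_step N y s g)"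
    using Cons.prems(3) bs bs' by (simp add: length_cuts_sym_step)
  then have "sym_step N x s g = sym_step N y s g"
    and "x \<in> candidates (sym_step N x s g)" "y \<in> candidates (sym_step N x s g)"
    using sym_step_eq_if_cuts_eq[OF Cons.prems(1,2)] by blast+
  then show ?case
    using Cons.IH[of "sym_step N x s g"] Cons.prems(3) by simp
qed simp

definition candidate_space :: "nat \<Rightarrow> nat \<Rightarrow> nat list \<Rightarrow> nat list set \<Rightarrow> nat \<Rightarrow> bool" where
  "candidate_space N m x V k \<longleftrightarrow>
     V \<subseteq> mdl_inputs N m \<and> affine_closed N V \<and> x \<in> V \<and> card V * N ^ k \<le> N ^ m"

lemma candidate_space_cut:
  assumes N: "prime N" and V: "candidate_space N m x V k"
    and f: "affine_map N m f" and g: "affine_map N m g"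
    and "f x = g x" "y \<in> V" "f y \<noteq> g y"
  shows "candidate_space N m x (V \<inter> {y. f y = g y}) (Suc k)"
proof -
  have "card (V \<inter> {y. f y = g y}) * N ^ Suc k = N * card (V \<inter> {y. f y = g y}) * N ^ k"
    by (simp add: ac_simps)
  also have "\<dots> \<le> card V * N ^ k"
    using card_affine_slice_le[OF N _ _ f g, of V x y] V assms(5-7) by (simp add: candidate_space_def)
  also have "\<dots> \<le> N ^ m"
    using V by (simp add: candidate_space_def)
  finally have "card (V \<inter> {y. f y = g y}) * N ^ Suc k \<le> N ^ m" .
  moreover have "affine_closed N (V \<inter> {y. f y = g y})"
    using affine_closed_Int_eq[OF prime_gt_0_nat[OF N] _ _ f g] V by (simp add: candidate_space_def)
  ultimately show ?thesis
    using V \<open>f x = g x\<close> by (auto simp: candidate_space_def)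
qed

lemma candidate_space_le:
  assumes "candidate_space N m x V k" "1 < N"
  shows "k \<le> m"
proof -
  have "finite V"
    using assms(1) finite_mdl_inputs finite_subset by (auto simp: candidate_space_def)
  then have "card V \<ge> 1"
    using assms(1) by (auto simp: candidate_space_def Suc_le_eq card_gt_0_iff)
  then have "N ^ k \<le> N ^ m"
    using assms(1) order_trans[OF mult_le_mono1] unfolding candidate_space_def by fastforce
  then show ?thesis
    using assms(2) by simp
qed

definition sym_inv :: "nat \<Rightarrow> nat \<Rightarrow> nat list \<Rightarrow> sym_state \<Rightarrow> bool" where
  "sym_inv N m x s \<longleftrightarrow> (\<forall>f. Some f \<in> set (sym_elems s) \<longrightarrow> affine_map N m f) \<and>
     candidate_space N m x (candidates s) (length (filter id (cuts s)))"

lemma sym_inv_append_elem: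
  assumes "sym_inv N m x s" "\<And>f. e = Some f \<Longrightarrow> affine_map N m f"
  shows "sym_inv N m x (s\<lparr>sym_elems := sym_elems s @ [e], cuts := cuts s @ [False]\<rparr>)"
  using assms by (auto simp: sym_inv_def)

lemma affine_map_group_op:
  assumes "N > 0" and "\<And>f h. a = Some f \<Longrightarrow> b = Some h \<Longrightarrow> affine_map N m f \<and> affine_map N m h"
    and "(case (a, b) of
            (Some f, Some h) \<Rightarrow> Some (\<lambda>y. (f y + (if sel then h y else 0)) mod N)
          | _ \<Rightarrow> None) = Some e"
  shows "affine_map N m e"
proof -
  obtain f h where fh: "a = Some f" "b = Some h" and e: "e = (\<lambda>y. (f y + (if sel then h y else 0)) mod N)"
    using assms(3) by (auto split: option.splits)
  have "affine_map N m f" "affine_map N m (if sel then h else (\<lambda>_. 0))"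
    using assms(1,2) fh by (auto simp: affine_map_const)
  from affine_map_add_mod[OF this assms(1)] show ?thesis
    unfolding e by (cases sel) simp_all
qed

lemma sym_step_inv:
  assumes N: "prime N" and wf: "wf_gate L (length (sym_bits s)) (length (sym_elems s)) g"
    and inv: "sym_inv N m x s"
  shows "sym_inv N m x (sym_step N x s g)"
proof -
  have N0: "N > 0"
    using N prime_gt_0_nat by blast
  have elem: "affine_map N m f" if "i < length (sym_elems s)" "sym_elems s ! i = Some f" for i f
    using inv that nth_mem[OF that(1)] by (auto simp: sym_inv_def)
  show ?thesis
  proof (cases g)
    case (BitG h ws)
    then show ?thesis
      using inv by (simp add: sym_inv_def)
  next
    case (Label ws)
    show ?thesis
      unfolding Label sym_step.simps
      by (rule sym_inv_append_elem[OF inv]) (auto simp: Let_def affine_map_const split: if_splits)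
  next
    case (GOp i j k)
    show ?thesis
      unfolding GOp sym_step.simps
      by (intro sym_inv_append_elem[OF inv] affine_map_group_op[OF N0]) (use elem wf GOp in auto)
  next
    case (EqG i j)
    show ?thesis
    proof (cases "\<exists>f h. sym_elems s ! i = Some f \<and> sym_elems s ! j = Some h")
      case True
      then obtain f h where fh: "sym_elems s ! i = Some f" "sym_elems s ! j = Some h"
        by blast
      have afh: "affine_map N m f" "affine_map N m h"
        using elem fh wf EqG by auto
      have V: "candidate_space N m x (candidates s) (length (filter id (cuts s)))"
        using inv by (simp add: sym_inv_def)
      show ?thesis
      proof (cases "f x = h x \<and> (\<exists>y\<in>candidates s. f y \<noteq> h y)")
        case True
        then obtain y where "f x = h x" "y \<in> candidates s" "f y \<noteq> h y"
          by blast
        with candidate_space_cut[OF N V afh]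
        have "candidate_space N m x (candidates s \<inter> {y. f y = h y}) (Suc (length (filter id (cuts s))))"
          by blast
        then show ?thesis
          using inv fh EqG True by (simp add: sym_inv_def Let_def)
      next
        case False
        then show ?thesis
          using inv fh EqG by (auto simp: sym_inv_def Let_def)
      qed
    next
      case False
      then show ?thesis
        using inv EqG by (auto simp: sym_inv_def split: option.splits)
    qed
  qed
qed

lemma foldl_sym_step_inv:
  assumes "prime N" "wf_gates L (length (sym_bits s)) (length (sym_elems s)) gs" "sym_inv N m x s"
  shows "sym_inv N m x (foldl (sym_step N x) s gs)"
  using assms(2,3)
proof (induction gs arbitrary: s)
  case (Cons g gs)
  then have "wf_gate L (length (sym_bits s)) (length (sym_elems s)) g"
    and "wf_gates L (length (sym_bits (sym_step N x s g))) (length (sym_elems (sym_step N x s g))) gs"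
    by (simp_all add: length_sym_step)
  with Cons.IH Cons.prems(2) show ?case
    by (simp add: sym_step_inv[OF assms(1)])
qed simp

definition sym_init :: "nat \<Rightarrow> nat \<Rightarrow> sym_state" where
  "sym_init N m = \<lparr>sym_bits = [], sym_elems = Some (\<lambda>_. 1) # map (\<lambda>i. Some (\<lambda>y. y ! i)) [0..<m],
     candidates = mdl_inputs N m, cuts = []\<rparr>"

definition sym_run :: "nat \<Rightarrow> nat \<Rightarrow> circuit \<Rightarrow> nat list \<Rightarrow> sym_state" where
  "sym_run N m c x = foldl (sym_step N x) (sym_init N m) (gates c)"

lemma wf_gates_sym_init:
  "wf_circuit N m c \<Longrightarrow>
     wf_gates (nbits N) (length (sym_bits (sym_init N m))) (length (sym_elems (sym_init N m))) (gates c)"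
  by (simp add: wf_circuit_def sym_init_def)

lemma run_eq_observe_sym_run:
  assumes "wf_circuit N m c" "length x = m"
  shows "run N c x = observe x (sym_run N m c x)"
proof -
  have "observe x (sym_init N m) = ([], Some 1 # map Some x)"
    using assms(2) by (auto intro!: nth_equalityI simp: observe_def sym_init_def nth_Cons')
  then have "run N c x = foldl (step N) (observe x (sym_init N m)) (gates c)"
    by (simp add: run_def)
  also have "\<dots> = observe x (sym_run N m c x)"
    unfolding sym_run_def by (rule foldl_step_observe[OF wf_gates_sym_init[OF assms(1)]])
  finally show ?thesis .
qed

lemma sym_inv_sym_run:
  assumes N: "prime N" and "wf_circuit N m c" "x \<in> mdl_inputs N m"
  shows "sym_inv N m x (sym_run N m c x)"
  unfolding sym_run_def
proof (rule foldl_sym_step_inv[OF N wf_gates_sym_init[OF assms(2)]])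
  have "N > 1"
    using N prime_gt_1_nat by blast
  then show "sym_inv N m x (sym_init N m)"
    using assms(3) affine_map_const[of 1 N m] affine_map_nth[of N _ m] affine_closed_mdl_inputs[of N m]
    by (auto simp: sym_inv_def sym_init_def candidate_space_def card_mdl_inputs)
qed

section \<open>Counting the inputs on which a circuit succeeds\<close>

definition sparse_patterns :: "('a \<Rightarrow> bool) \<Rightarrow> 'a list \<Rightarrow> nat \<Rightarrow> bool list set" where
  "sparse_patterns P xs m = {bs. list_all2 (\<lambda>b a. b \<longrightarrow> P a) bs xs \<and> length (filter id bs) \<le> m}"

lemma card_sparse_patterns_le:
  "card (sparse_patterns P xs m) \<le> (\<Sum>k\<le>m. length (filter P xs) choose k)"
proof -
  define Q where "Q = {t. t < length xs \<and> P (xs ! t)}"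
  define support where "support = (\<lambda>bs::bool list. {t. t < length bs \<and> bs ! t})"
  have len: "length bs = length xs" if "bs \<in> sparse_patterns P xs m" for bs
    using that by (auto simp: sparse_patterns_def dest: list_all2_lengthD)
  have inj: "inj_on support (sparse_patterns P xs m)"
  proof (rule inj_onI)
    fix bs bs' assume "bs \<in> sparse_patterns P xs m" "bs' \<in> sparse_patterns P xs m"
      and "support bs = support bs'"
    then show "bs = bs'"
      using len by (intro nth_equalityI) (auto simp: support_def set_eq_iff)
  qed
  have img: "support ` sparse_patterns P xs m \<subseteq> (\<Union>k\<le>m. {B. B \<subseteq> Q \<and> card B = k})"
  proof clarify
    fix bs assume bs: "bs \<in> sparse_patterns P xs m"
    then have "support bs \<subseteq> Q"
      using len[OF bs] list_all2_nthD[of _ bs xs] by (auto simp: sparse_patterns_def support_def Q_def)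
    moreover have "card (support bs) \<le> m"
      using bs by (simp add: sparse_patterns_def support_def length_filter_conv_card)
    ultimately show "support bs \<in> (\<Union>k\<le>m. {B. B \<subseteq> Q \<and> card B = k})"
      by auto
  qed
  have "finite Q"
    by (simp add: Q_def)
  have "card (sparse_patterns P xs m) = card (support ` sparse_patterns P xs m)"
    using card_image[OF inj] by simp
  also have "\<dots> \<le> card (\<Union>k\<le>m. {B. B \<subseteq> Q \<and> card B = k})"
    using img \<open>finite Q\<close> by (intro card_mono) auto
  also have "\<dots> \<le> (\<Sum>k\<le>m. card {B. B \<subseteq> Q \<and> card B = k})"
    by (rule card_UN_le) simp
  also have "\<dots> = (\<Sum>k\<le>m. length (filter P xs) choose k)"
    using n_subsets[OF \<open>finite Q\<close>] by (simp add: Q_def length_filter_conv_card)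
  finally show ?thesis .
qed

lemma cuts_sym_run_mem:
  assumes N: "prime N" and "wf_circuit N m c" "x \<in> mdl_inputs N m"
  shows "cuts (sym_run N m c x) \<in> sparse_patterns is_eq (gates c) m"
proof -
  have "length (filter id (cuts (sym_run N m c x))) \<le> m"
    using sym_inv_sym_run[OF assms] candidate_space_le prime_gt_1_nat[OF N] by (auto simp: sym_inv_def)
  moreover obtain bs where "cuts (sym_run N m c x) = cuts (sym_init N m) @ bs"
    "list_all2 (\<lambda>b g. b \<longrightarrow> is_eq g) bs (gates c)"
    unfolding sym_run_def using cuts_foldl_sym_step by blast
  ultimately show ?thesis
    by (simp add: sparse_patterns_def sym_init_def)
qed

lemma inj_on_cuts_sym_run:
  assumes "wf_circuit N m c"
  shows "inj_on (\<lambda>x. cuts (sym_run N m c x)) {x \<in> mdl_inputs N m. circ_output N c x = x}"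
proof (rule inj_onI)
  fix x y assume x: "x \<in> {x \<in> mdl_inputs N m. circ_output N c x = x}"
    and y: "y \<in> {x \<in> mdl_inputs N m. circ_output N c x = x}"
    and "cuts (sym_run N m c x) = cuts (sym_run N m c y)"
  then have "sym_run N m c x = sym_run N m c y"
    unfolding sym_run_def by (intro foldl_sym_step_eq_if_cuts_eq) (auto simp: sym_init_def)
  moreover have "length x = m" "length y = m"
    using x y by (auto simp: mdl_inputs_def)
  ultimately have "fst (run N c x) = fst (run N c y)"
    using run_eq_observe_sym_run[OF assms] by (simp add: observe_def)
  then have "circ_output N c x = circ_output N c y"
    by (auto simp: circ_output_def)
  then show "x = y"
    using x y by simp
qed

lemma card_success_le:
  assumes "prime N" "wf_circuit N m c"
  shows "card {x \<in> mdl_inputs N m. circ_output N c x = x}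
    \<le> (\<Sum>k\<le>m. length (filter is_eq (gates c)) choose k)"
proof -
  have "finite {bs :: bool list. length bs = length (gates c)}"
    using finite_lists_length_eq[of "UNIV :: bool set" "length (gates c)"] by simp
  then have "finite (sparse_patterns is_eq (gates c) m)"
    by (rule finite_subset[rotated]) (auto simp: sparse_patterns_def dest: list_all2_lengthD)
  then have "card {x \<in> mdl_inputs N m. circ_output N c x = x} \<le> card (sparse_patterns is_eq (gates c) m)"
    using cuts_sym_run_mem[OF assms] by (intro card_inj_on_le[OF inj_on_cuts_sym_run[OF assms(2)]]) auto
  then show ?thesis
    using card_sparse_patterns_le order_trans by blast
qed

lemma length_filter_is_eq: "length (filter is_eq gs) = length (concat (map eq_inputs gs))"
proof (induction gs)
  case (Cons g gs)
  then show ?case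
    by (cases g) simp_all
qed simp

lemma sum_list_new_elems: "sum_list (map new_elems gs) = length (filter costly gs)"
proof (induction gs)
  case (Cons g gs)
  then show ?case
    by (cases g) simp_all
qed simp

definition wire_pairs :: "nat \<Rightarrow> nat set set" where
  "wire_pairs n = {{i, j} | i j. i < n \<and> j < n}"

lemma wire_pairs_mono: "n \<le> n' \<Longrightarrow> wire_pairs n \<subseteq> wire_pairs n'"
  unfolding wire_pairs_def using less_le_trans by blast

lemma finite_wire_pairs: "finite (wire_pairs n)"
  by (rule finite_subset[of _ "Pow {..<n}"]) (auto simp: wire_pairs_def)

lemma card_wire_pairs_le: "card (wire_pairs n) \<le> Suc n choose 2"
proof -
  let ?S = "\<lambda>k. {B. B \<subseteq> {..<n} \<and> card B = k}"
  have "{i, j} \<in> ?S 1 \<union> ?S 2" if "i < n" "j < n" for i j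
    using that by (cases "i = j") auto
  then have "wire_pairs n \<subseteq> ?S 1 \<union> ?S 2"
    by (auto simp: wire_pairs_def)
  then have "card (wire_pairs n) \<le> card (?S 1 \<union> ?S 2)"
    by (intro card_mono) auto
  also have "\<dots> \<le> card (?S 1) + card (?S 2)"
    by (rule card_Un_le)
  also have "\<dots> = Suc n choose 2"
    by (simp add: n_subsets numeral_2_eq_2)
  finally show ?thesis .
qed

lemma eq_inputs_subset_wire_pairs:
  assumes "wf_gates L nb ne gs"
  shows "set (concat (map eq_inputs gs)) \<subseteq> wire_pairs (ne + sum_list (map new_elems gs))"
  using assms
proof (induction gs arbitrary: nb ne)
  case (Cons g gs)
  have "set (eq_inputs g) \<subseteq> wire_pairs ne"
    using Cons.prems by (cases g) (auto simp: wire_pairs_def)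
  also have "\<dots> \<subseteq> wire_pairs (ne + sum_list (map new_elems (g # gs)))"
    by (rule wire_pairs_mono) simp
  finally have "set (eq_inputs g) \<subseteq> wire_pairs (ne + sum_list (map new_elems (g # gs)))" .
  moreover have "set (concat (map eq_inputs gs)) \<subseteq> wire_pairs (ne + sum_list (map new_elems (g # gs)))"
    using Cons.IH[of "nb + new_bits g" "ne + new_elems g"] Cons.prems by (simp add: add.assoc)
  ultimately show ?case
    by simp
qed simp

lemma two_mult_Suc_choose_two: "2 * (Suc n choose 2) = Suc n * n"
  by (induction n) (simp_all add: numeral_2_eq_2)

lemma eq_gates_le:
  assumes "wf_circuit N m c"
  shows "length (filter is_eq (gates c)) \<le> Suc (m + 1 + cost c) choose 2"
proof -
  let ?L = "concat (map eq_inputs (gates c))"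
  have "length (filter is_eq (gates c)) = length ?L"
    by (rule length_filter_is_eq)
  also have "\<dots> = card (set ?L)"
    using assms unfolding wf_circuit_def by (metis distinct_card)
  also have "\<dots> \<le> card (wire_pairs (m + 1 + cost c))"
    using eq_inputs_subset_wire_pairs[of "nbits N" 0 "m + 1" "gates c"] assms
    by (intro card_mono finite_wire_pairs) (simp add: wf_circuit_def cost_def sum_list_new_elems)
  also have "\<dots> \<le> Suc (m + 1 + cost c) choose 2"
    by (rule card_wire_pairs_le)
  finally show ?thesis .
qed

section \<open>The success probability\<close>

lemma sum_power_div_fact_le_exp:
  fixes x :: real
  assumes "0 \<le> x"
  shows "(\<Sum>k\<le>n. x ^ k / fact k) \<le> exp x"
proof -
  have "(\<lambda>k. x ^ k /\<^sub>R fact k) sums exp x"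
    by (rule exp_converges)
  then have "(\<Sum>k\<le>n. x ^ k /\<^sub>R fact k) \<le> suminf (\<lambda>k. x ^ k /\<^sub>R fact k)"
    using assms by (intro sum_le_suminf) (auto intro: sums_summable)
  then show ?thesis
    using sums_unique[OF \<open>(\<lambda>k. x ^ k /\<^sub>R fact k) sums exp x\<close>] by (simp add: divide_inverse mult.commute)
qed

lemma sum_binomial_le_exp_pow:
  fixes P :: real
  assumes m: "m > 0" and P: "real m \<le> P" "real Q \<le> P"
  shows "(\<Sum>k\<le>m. real (Q choose k)) \<le> (exp 1 * P / real m) ^ m"
proof -
  have ratio: "P / real m \<ge> 1"
    using m P by simp
  have "(\<Sum>k\<le>m. real (Q choose k)) \<le> (\<Sum>k\<le>m. (P / real m) ^ m * (real m ^ k / fact k))"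
  proof (rule sum_mono)
    fix k assume k: "k \<in> {..m}"
    have "real (Q choose k) * fact k \<le> real Q ^ k"
      using binomial_fact_pow[of Q k] by (metis of_nat_fact of_nat_le_iff of_nat_mult of_nat_power)
    also have "\<dots> \<le> P ^ k"
      using P by (simp add: power_mono)
    also have "\<dots> = (P / real m) ^ k * real m ^ k"
      using m by (simp add: power_divide)
    also have "\<dots> \<le> (P / real m) ^ m * real m ^ k"
      using k ratio by (intro mult_right_mono power_increasing) auto
    finally have "real (Q choose k) \<le> (P / real m) ^ m * real m ^ k / fact k"
      by (rule pos_le_divide_eq[OF fact_gt_zero, THEN iffD2])
    then show "real (Q choose k) \<le> (P / real m) ^ m * (real m ^ k / fact k)"
      by simp
  qed
  also have "\<dots> = (P / real m) ^ m * (\<Sum>k\<le>m. real m ^ k / fact k)"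
    by (simp add: sum_distrib_left)
  also have "\<dots> \<le> (P / real m) ^ m * exp (real m)"
    using ratio by (intro mult_left_mono sum_power_div_fact_le_exp) auto
  also have "exp (real m) = exp 1 ^ m"
    using exp_of_nat_mult[of m 1] by simp
  also have "(P / real m) ^ m * exp 1 ^ m = (exp 1 * P / real m) ^ m"
    unfolding times_divide_eq_right[symmetric] power_mult_distrib by (rule mult.commute)
  finally show ?thesis .
qed

lemma two_mult_eq_gates_le:
  assumes "wf_circuit N m c" "cost c \<le> T" "m > 0"
  shows "2 * length (filter is_eq (gates c)) \<le> (T + 2 * m + 1)^2"
proof -
  have "2 * length (filter is_eq (gates c)) \<le> 2 * (Suc (m + 1 + cost c) choose 2)"
    using eq_gates_le[OF assms(1)] by simp
  also have "\<dots> = (m + 2 + cost c) * (m + 1 + cost c)"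
    by (simp only: two_mult_Suc_choose_two) simp
  also have "\<dots> \<le> (T + 2 * m + 1) * (T + 2 * m + 1)"
    using assms(2,3) by (intro mult_mono) auto
  finally show ?thesis
    by (simp only: power2_eq_square)
qed

lemma success_prob_circuit_le:
  assumes N: "prime N" and m: "m > 0" and c: "wf_circuit N m c" "cost c \<le> T"
  shows "measure_pmf.prob (pmf_of_set (mdl_inputs N m)) {xs. circ_output N c xs = xs}
    \<le> (exp 1 * (real T + 2 * real m + 1)^2 / (2 * real m * real N)) ^ m"
proof -
  define P :: real where "P = (real T + 2 * real m + 1)^2 / 2"
  define Q where "Q = length (filter is_eq (gates c))"
  have "real (2 * Q) \<le> real ((T + 2 * m + 1)^2)"
    unfolding Q_def of_nat_le_iff by (rule two_mult_eq_gates_le[OF c m])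
  then have Q: "real Q \<le> P"
    unfolding P_def by (simp add: ac_simps)
  have "real m \<le> P"
    unfolding P_def using m by (simp add: power2_eq_square algebra_simps)
  have "replicate m 0 \<in> mdl_inputs N m"
    using prime_gt_0_nat[OF N] by (auto simp: mdl_inputs_def)
  then have "mdl_inputs N m \<noteq> {}"
    by blast
  then have "measure_pmf.prob (pmf_of_set (mdl_inputs N m)) {xs. circ_output N c xs = xs}
      = real (card {x \<in> mdl_inputs N m. circ_output N c x = x}) / real N ^ m"
    by (simp add: measure_pmf_of_set finite_mdl_inputs card_mdl_inputs Int_def conj_commute)
  also have "\<dots> \<le> (\<Sum>k\<le>m. real (Q choose k)) / real N ^ m"
    using card_success_le[OF N c(1)] unfolding Q_def
    by (intro divide_right_mono) (simp_all flip: of_nat_sum)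
  also have "\<dots> \<le> (exp 1 * P / real m) ^ m / real N ^ m"
    by (intro divide_right_mono sum_binomial_le_exp_pow[OF m \<open>real m \<le> P\<close> Q]) simp
  also have "\<dots> = (exp 1 * P / real m / real N) ^ m"
    by (simp add: power_divide power_mult_distrib)
  also have "exp 1 * P / real m / real N = exp 1 * (real T + 2 * real m + 1)^2 / (2 * real m * real N)"
    by (simp add: P_def)
  finally show ?thesis .
qed

lemma measure_pair_pmf_le:
  assumes "\<And>a. a \<in> set_pmf A \<Longrightarrow> measure_pmf.prob U (Pair a -` S) \<le> B" "0 \<le> B"
  shows "measure_pmf.prob (pair_pmf A U) S \<le> B"
proof -
  have "emeasure (pair_pmf A U) S = (\<integral>\<^sup>+a. emeasure U (Pair a -` S) \<partial>A)"
    by (simp add: pair_pmf_def map_pmf_def[symmetric])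
  also have "\<dots> \<le> ennreal B"
    using assms by (intro measure_pmf.nn_integral_le_const)
      (auto simp: AE_measure_pmf_iff measure_pmf.emeasure_eq_measure)
  finally show ?thesis
    using assms(2) by (simp add: measure_pmf.emeasure_eq_measure)
qed

theorem mainTheorem4:
  shows "\<exists>C::real. \<forall>(N::nat) (m::nat) (T::nat) (A::circuit pmf).
           prime N \<and> m > 0 \<and> (\<forall>c\<in>set_pmf A. wf_circuit N m c \<and> cost c \<le> T) \<longrightarrow>
           success_prob N m A
             \<le> C * (exp 1 * (real T + 2 * real m + 1)^2 / (2 * real m * real N)) ^ m"
proof (intro exI[of _ 1] allI impI)
  fix N m T :: nat and A :: "circuit pmf"
  assume "prime N \<and> m > 0 \<and> (\<forall>c\<in>set_pmf A. wf_circuit N m c \<and> cost c \<le> T)"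
  then have "success_prob N m A \<le> (exp 1 * (real T + 2 * real m + 1)^2 / (2 * real m * real N)) ^ m"
    unfolding success_prob_def
    by (intro measure_pair_pmf_le) (auto simp: vimage_def intro: success_prob_circuit_le)
  then show "success_prob N m A \<le> 1 * (exp 1 * (real T + 2 * real m + 1)^2 / (2 * real m * real N)) ^ m"
    by simp
qed

end
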